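(* $\left\|\begin{bmatrix}1&1&0&0\\1&0&1&0\\1&0&0&1\\0&0&0&1\end{bmatrix}\right\|_\bullet>\left\|\begin{bmatrix}1&1&0&0\\0&1&1&0\\0&0&1&1\\0&0&0&1\end{bmatrix}\right\|_\bullet$.
   Context: Fix $\mathbb F\in\{\mathbb R,\mathbb C\}$. For an $m\times n$ matrix $A$, the Schur norm is $\|A\|_\bullet=\sup\{\|A\bullet X\|: X\in M_{m,n}(\mathbb F),\ \|X\|\le1\}$, where $A\bullet X=[a_{ij}x_{ij}]$ is the entrywise product and $\|\cdot\|$ is the operator norm $\ell^2_n\to\ell^2_m$. *)

theory Defs
  imports "HOL-Analysis.Analysis"
begin

definition mat_opnorm :: "'a::{real_normed_field}^'n^'m \<Rightarrow> real" where
  "mat_opnorm X = onorm (\<lambda>x. X *v x)"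

definition schur_prod :: "'a::times^'n^'m \<Rightarrow> 'a^'n^'m \<Rightarrow> 'a^'n^'m" where
  "schur_prod A X = (\<chi> i j. A $ i $ j * X $ i $ j)"

definition schur_norm :: "'a::{real_normed_field}^'n^'m \<Rightarrow> real" where
  "schur_norm A = Sup {mat_opnorm (schur_prod A X) | X. mat_opnorm X \<le> 1}"

definition matA :: "'a::{real_normed_field}^4^4" where
  "matA = vector [vector [1,1,0,0], vector [1,0,1,0], vector [1,0,0,1], vector [0,0,0,1]]"

definition matB :: "'a::{real_normed_field}^4^4" where
  "matB = vector [vector [1,1,0,0], vector [0,1,1,0], vector [0,0,1,1], vector [0,0,0,1]]"

end

theory Submission
  imports Defs
begin

text \<open>
  An upper bound for the Schur norm of \<open>B\<close> comes from a factorization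
  \<open>B i j = (\<Sum>k. d k * U i k * V j k)\<close> with \<open>d \<ge> 0\<close>: the \<open>i\<close>-th entry of
  \<open>(B \<bullet> X) y\<close> is \<open>\<Sum>k. d k * U i k * (X w\<^sub>k) i\<close> where \<open>w\<^sub>k j = V j k * y j\<close>, so a weighted
  Cauchy-Schwarz inequality and \<open>\<parallel>X\<parallel> \<le> 1\<close> bound \<open>\<parallel>B\<parallel>\<^sub>\<bullet>\<^sup>2\<close> by the product of the largest
  weighted squared row norms of \<open>U\<close> and of \<open>V\<close>; an explicit factorization gives
  \<open>144/95 \<approx> 1.516\<close>. A lower bound for \<open>A\<close> comes from testing with a real orthogonal
  matrix, which is a contraction over \<open>\<complex>\<close> as well: for a suitable \<open>R\<close> and
  \<open>y = (2,1,1,1)\<close> one gets \<open>\<parallel>(A \<bullet> R) y\<parallel>\<^sup>2 / \<parallel>y\<parallel>\<^sup>2 = 4727/3087 \<approx> 1.531\<close>.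
\<close>

lemma norm_vec_power2: "(norm x)\<^sup>2 = (\<Sum>i\<in>UNIV. (norm (x $ i))\<^sup>2)"
  by (simp add: norm_vec_def L2_set_def sum_nonneg)

lemma norm_matrix_vector_mult_le_contraction:
  fixes X :: "'a::{real_normed_field,euclidean_space}^'n^'m"
  assumes "mat_opnorm X \<le> 1"
  shows "norm (X *v x) \<le> norm x"
proof -
  have "norm (X *v x) \<le> mat_opnorm X * norm x"
    unfolding mat_opnorm_def by (rule onorm) simp
  also have "\<dots> \<le> norm x"
    using mult_right_mono[OF assms norm_ge_zero] by simp
  finally show ?thesis .
qed

lemma mat_opnorm_le:
  fixes X :: "'a::{real_normed_field,euclidean_space}^'n^'m"
  assumes "\<And>x. norm (X *v x) \<le> c * norm x"
  shows "mat_opnorm X \<le> c"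
  unfolding mat_opnorm_def by (rule onorm_le) (rule assms)

lemma norm_matrix_vector_mult_div_le_mat_opnorm:
  fixes X :: "'a::{real_normed_field,euclidean_space}^'n^'m"
  shows "norm (X *v y) / norm y \<le> mat_opnorm X"
  unfolding mat_opnorm_def by (rule le_onorm) simp

lemma weighted_Cauchy_Schwarz_norm:
  fixes u z :: "'k \<Rightarrow> 'a::real_normed_field"
  assumes d: "\<And>k. k \<in> K \<Longrightarrow> 0 \<le> d k"
  shows "(norm (\<Sum>k\<in>K. of_real (d k) * u k * z k))\<^sup>2
         \<le> (\<Sum>k\<in>K. d k * (norm (u k))\<^sup>2) * (\<Sum>k\<in>K. d k * (norm (z k))\<^sup>2)"
proof -
  have "norm (\<Sum>k\<in>K. of_real (d k) * u k * z k)
        \<le> (\<Sum>k\<in>K. (sqrt (d k) * norm (u k)) * (sqrt (d k) * norm (z k)))"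
  proof (rule order_trans[OF norm_sum sum_mono])
    fix k assume "k \<in> K"
    show "norm (of_real (d k) * u k * z k) \<le> (sqrt (d k) * norm (u k)) * (sqrt (d k) * norm (z k))"
    proof -
      have "(sqrt (d k) * norm (u k)) * (sqrt (d k) * norm (z k))
            = (sqrt (d k) * sqrt (d k)) * (norm (u k) * norm (z k))"
        by (simp only: ac_simps)
      also have "\<dots> = norm (of_real (d k) * u k * z k)"
        using d \<open>k \<in> K\<close> by (simp add: norm_mult)
      finally show ?thesis by simp
    qed
  qed
  then have "(norm (\<Sum>k\<in>K. of_real (d k) * u k * z k))\<^sup>2
        \<le> (\<Sum>k\<in>K. (sqrt (d k) * norm (u k)) * (sqrt (d k) * norm (z k)))\<^sup>2"
    by (rule power_mono) simp
  also have "\<dots> \<le> (\<Sum>k\<in>K. (sqrt (d k) * norm (u k))\<^sup>2) * (\<Sum>k\<in>K. (sqrt (d k) * norm (z k))\<^sup>2)"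
    by (rule Cauchy_Schwarz_ineq_sum)
  also have "\<dots> = (\<Sum>k\<in>K. d k * (norm (u k))\<^sup>2) * (\<Sum>k\<in>K. d k * (norm (z k))\<^sup>2)"
    using d by (simp add: power_mult_distrib)
  finally show ?thesis .
qed

lemma schur_prod_factorization_mult_vec:
  fixes X :: "'a::real_normed_field^'n^'m"
  assumes "\<And>i j. M$i$j = (\<Sum>k\<in>UNIV. of_real (d k) * U i k * V j k)"
  shows "(schur_prod M X *v y)$i
         = (\<Sum>k\<in>UNIV. of_real (d k) * U i k * (X *v (\<chi> j. V j k * y$j))$i)"
proof -
  have "(schur_prod M X *v y)$i
        = (\<Sum>j\<in>UNIV. \<Sum>k\<in>UNIV. of_real (d k) * U i k * (X$i$j * (V j k * y$j)))"
    by (simp add: matrix_vector_mult_def schur_prod_def assms sum_distrib_left sum_distrib_right mult_ac)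
  also have "\<dots> = (\<Sum>k\<in>UNIV. \<Sum>j\<in>UNIV. of_real (d k) * U i k * (X$i$j * (V j k * y$j)))"
    by (rule sum.swap)
  finally show ?thesis
    by (simp add: matrix_vector_mult_def sum_distrib_left)
qed

lemma mat_opnorm_schur_prod_factorization_le:
  fixes M X :: "'a::{real_normed_field,euclidean_space}^'n^'m"
    and U :: "'m \<Rightarrow> 'k::finite \<Rightarrow> 'a" and V :: "'n \<Rightarrow> 'k \<Rightarrow> 'a"
  assumes M: "\<And>i j. M$i$j = (\<Sum>k\<in>UNIV. of_real (d k) * U i k * V j k)"
    and d: "\<And>k. 0 \<le> d k"
    and a: "\<And>i. (\<Sum>k\<in>UNIV. d k * (norm (U i k))\<^sup>2) \<le> a"
    and b: "\<And>j. (\<Sum>k\<in>UNIV. d k * (norm (V j k))\<^sup>2) \<le> b"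
    and X: "mat_opnorm X \<le> 1"
  shows "mat_opnorm (schur_prod M X) \<le> sqrt (a * b)"
proof (rule mat_opnorm_le)
  fix y :: "'a^'n"
  define w where "w k = (\<chi> j. V j k * y$j)" for k
  have a0: "0 \<le> a" and b0: "0 \<le> b"
    using order_trans[OF sum_nonneg a] order_trans[OF sum_nonneg b] d by auto
  have "(norm (schur_prod M X *v y))\<^sup>2
        = (\<Sum>i\<in>UNIV. (norm (\<Sum>k\<in>UNIV. of_real (d k) * U i k * (X *v w k)$i))\<^sup>2)"
    by (simp add: norm_vec_power2 schur_prod_factorization_mult_vec[OF M] w_def)
  also have "\<dots> \<le> (\<Sum>i\<in>UNIV. a * (\<Sum>k\<in>UNIV. d k * (norm ((X *v w k)$i))\<^sup>2))"
    by (intro sum_mono order_trans[OF weighted_Cauchy_Schwarz_norm] mult_right_mono a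
        sum_nonneg mult_nonneg_nonneg d) simp_all
  also have "\<dots> = a * (\<Sum>k\<in>UNIV. \<Sum>i\<in>UNIV. d k * (norm ((X *v w k)$i))\<^sup>2)"
    by (simp add: sum_distrib_left[symmetric] sum.swap[of _ UNIV UNIV])
  also have "\<dots> = a * (\<Sum>k\<in>UNIV. d k * (norm (X *v w k))\<^sup>2)"
    by (simp add: norm_vec_power2 sum_distrib_left)
  also have "\<dots> \<le> a * (\<Sum>k\<in>UNIV. d k * (norm (w k))\<^sup>2)"
    using norm_matrix_vector_mult_le_contraction[OF X]
    by (intro mult_left_mono[OF sum_mono a0] mult_left_mono[OF power_mono d]) simp_all
  also have "(\<Sum>k\<in>UNIV. d k * (norm (w k))\<^sup>2)
             = (\<Sum>j\<in>UNIV. (norm (y$j))\<^sup>2 * (\<Sum>k\<in>UNIV. d k * (norm (V j k))\<^sup>2))"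
    by (simp add: w_def norm_vec_power2 norm_mult power_mult_distrib sum_distrib_left
        sum.swap[of "\<lambda>k j. d k * _ k j"] mult_ac)
  also have "\<dots> \<le> (\<Sum>j\<in>UNIV. (norm (y$j))\<^sup>2 * b)"
    by (intro sum_mono mult_left_mono b) simp
  also have "\<dots> = b * (norm y)\<^sup>2"
    by (simp add: norm_vec_power2 sum_distrib_left mult.commute)
  finally have "(norm (schur_prod M X *v y))\<^sup>2 \<le> (sqrt (a * b) * norm y)\<^sup>2"
    using a0 b0 by (simp add: power_mult_distrib mult_left_mono mult.assoc)
  then show "norm (schur_prod M X *v y) \<le> sqrt (a * b) * norm y"
    by (rule power2_le_imp_le) (simp add: a0 b0)
qed

lemma bdd_above_mat_opnorm_schur_prod:
  fixes M :: "'a::{real_normed_field,euclidean_space}^'n^'m"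
  shows "bdd_above {mat_opnorm (schur_prod M X) | X. mat_opnorm X \<le> 1}"
proof -
  let ?a = "\<Sum>i\<in>UNIV. \<Sum>k\<in>UNIV. (norm (M$i$k))\<^sup>2"
  have "mat_opnorm (schur_prod M X) \<le> sqrt (?a * 1)" if "mat_opnorm X \<le> 1" for X
  proof (rule mat_opnorm_schur_prod_factorization_le
      [where d = "\<lambda>_. 1" and U = "\<lambda>i k. M$i$k" and V = "\<lambda>j k. if j = k then 1 else 0"])
    show "(\<Sum>k\<in>UNIV. 1 * (norm (M$i$k))\<^sup>2) \<le> ?a" for i
      using member_le_sum[of i UNIV "\<lambda>i. \<Sum>k\<in>UNIV. (norm (M$i$k))\<^sup>2"]
      by (simp add: sum_nonneg)
    show "(\<Sum>k\<in>UNIV. 1 * (norm (if j = k then 1 else 0 :: 'a))\<^sup>2) \<le> 1" for j :: 'n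
      by (simp add: if_distrib[of "\<lambda>t. (norm t)\<^sup>2"] sum.delta' cong: if_cong)
  qed (simp_all add: that if_distrib cong: if_cong)
  then show ?thesis
    unfolding bdd_above_def by blast
qed

lemma schur_norm_le:
  fixes M :: "'a::{real_normed_field,euclidean_space}^'n^'m"
  assumes "\<And>X. mat_opnorm X \<le> 1 \<Longrightarrow> mat_opnorm (schur_prod M X) \<le> c"
  shows "schur_norm M \<le> c"
proof -
  have "mat_opnorm (0 :: 'a^'n^'m) \<le> 1"
    by (rule mat_opnorm_le) simp
  then show ?thesis
    unfolding schur_norm_def using assms by (intro cSup_least) auto
qed

lemma mat_opnorm_schur_prod_le_schur_norm:
  fixes M X :: "'a::{real_normed_field,euclidean_space}^'n^'m"
  assumes "mat_opnorm X \<le> 1"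
  shows "mat_opnorm (schur_prod M X) \<le> schur_norm M"
  unfolding schur_norm_def
  using assms bdd_above_mat_opnorm_schur_prod by (intro cSup_upper) auto

definition of_real_vec :: "real^'n \<Rightarrow> 'a::real_normed_field^'n" where
  "of_real_vec v = (\<chi> i. of_real (v$i))"

definition of_real_mat :: "real^'n^'m \<Rightarrow> 'a::real_normed_field^'n^'m" where
  "of_real_mat A = (\<chi> i j. of_real (A$i$j))"

lemma of_real_mat_nth [simp]: "of_real_mat A $ i $ j = of_real (A$i$j)"
  by (simp add: of_real_mat_def)

lemma norm_of_real_vec [simp]: "norm (of_real_vec v :: 'a::real_normed_field^'n) = norm v"
  by (simp add: norm_vec_def of_real_vec_def)

lemma schur_prod_of_real_mat_mult_vec:
  "schur_prod (of_real_mat A) (of_real_mat R) *v of_real_vec y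
   = (of_real_vec (schur_prod A R *v y) :: 'a::real_normed_field^'n)"
  by (simp add: vec_eq_iff of_real_vec_def schur_prod_def matrix_vector_mult_def of_real_sum)

lemma norm_of_real_mat_orthogonal_mult_vec:
  fixes x :: "'a::{real_normed_field,real_inner}^'n"
  assumes "orthogonal_matrix R"
  shows "norm (of_real_mat R *v x) = norm x"
proof -
  have cols: "(\<Sum>i\<in>UNIV. R$i$j * R$i$l) = (if j = l then 1 else 0)" for j l
    using arg_cong[OF orthogonal_matrix[THEN iffD1, OF assms], of "\<lambda>Q. Q$j$l"]
    by (simp add: matrix_matrix_mult_def transpose_def mat_def)
  have "(norm (of_real_mat R *v x))\<^sup>2
        = (\<Sum>i\<in>UNIV. inner (\<Sum>j\<in>UNIV. R$i$j *\<^sub>R x$j) (\<Sum>l\<in>UNIV. R$i$l *\<^sub>R x$l))"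
    by (simp add: norm_vec_power2 power2_norm_eq_inner matrix_vector_mult_def scaleR_conv_of_real)
  also have "\<dots> = (\<Sum>i\<in>UNIV. \<Sum>l\<in>UNIV. \<Sum>j\<in>UNIV. R$i$j * R$i$l * inner (x$j) (x$l))"
    by (simp add: inner_sum_left inner_sum_right sum_distrib_left mult_ac)
  also have "\<dots> = (\<Sum>l\<in>UNIV. \<Sum>j\<in>UNIV. \<Sum>i\<in>UNIV. R$i$j * R$i$l * inner (x$j) (x$l))"
    by (subst sum.swap) (rule sum.cong[OF refl], rule sum.swap)
  also have "\<dots> = (\<Sum>l\<in>UNIV. \<Sum>j\<in>UNIV. (if j = l then inner (x$j) (x$l) else 0))"
    by (simp add: cols mult_if_delta flip: sum_distrib_right)
  also have "\<dots> = (norm x)\<^sup>2"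
    by (simp add: norm_vec_power2 power2_norm_eq_inner)
  finally show ?thesis
    by simp
qed

lemma mat_opnorm_of_real_mat_orthogonal_le:
  assumes "orthogonal_matrix R"
  shows "mat_opnorm (of_real_mat R :: 'a::{real_normed_field,euclidean_space}^'n^'n) \<le> 1"
  by (rule mat_opnorm_le) (simp add: norm_of_real_mat_orthogonal_mult_vec[OF assms])

lemma vector_4 [simp]:
  "(vector [x, y, z, w] :: 'a::zero^4) $ 1 = x"
  "(vector [x, y, z, w] :: 'a^4) $ 2 = y"
  "(vector [x, y, z, w] :: 'a^4) $ 3 = z"
  "(vector [x, y, z, w] :: 'a^4) $ 4 = w"
  unfolding vector_def by simp_all

lemma matA_eq_of_real_mat: "(matA :: 'a::real_normed_field^4^4) = of_real_mat matA"
  by (simp add: vec_eq_iff forall_4 matA_def)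

lemma matB_eq_of_real_mat: "(matB :: 'a::real_normed_field^4^4) = of_real_mat matB"
  by (simp add: vec_eq_iff forall_4 matB_def)

definition LB :: "real^4^4" where
  "LB = vector [vector [1, 0, 0, 0], vector [3/8, 1, 0, 0],
                vector [-1/8, 27/55, 1, 0], vector [1/8, -1/5, 11/18, 1]]"

definition VB :: "real^4^4" where
  "VB = vector [vector [1/8, -3/55, 17/342, -7/95], vector [1/8, 1/11, -5/171, 2/95],
                vector [0, 8/55, 14/171, -2/95], vector [0, 0, 55/342, 7/95]]"

definition dB :: "real^4" where
  "dB = vector [8, 55/8, 342/55, 95/18]"

lemma matB_factorization: "matB $ i $ j = (\<Sum>k\<in>UNIV. dB$k * LB$i$k * VB$j$k)"
  using exhaust_4[of i] exhaust_4[of j] by (auto simp: sum_4 dB_def LB_def VB_def matB_def)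

lemma schur_norm_matB_le:
  "schur_norm (matB :: 'a::{real_normed_field,euclidean_space}^4^4) \<le> sqrt (8 * (18/95))"
proof (rule schur_norm_le, rule mat_opnorm_schur_prod_factorization_le
    [where d = "\<lambda>k. dB$k" and U = "\<lambda>i k. of_real (LB$i$k)" and V = "\<lambda>j k. of_real (VB$j$k)"])
  show "(\<Sum>k\<in>UNIV. dB$k * (norm (of_real (LB$i$k) :: 'a))\<^sup>2) \<le> 8" for i
    using exhaust_4[of i] by (auto simp: sum_4 dB_def LB_def power2_eq_square)
  show "(\<Sum>k\<in>UNIV. dB$k * (norm (of_real (VB$j$k) :: 'a))\<^sup>2) \<le> 18/95" for j
    using exhaust_4[of j] by (auto simp: sum_4 dB_def VB_def power2_eq_square)
  show "0 \<le> dB$k" for k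
    using exhaust_4[of k] by (auto simp: dB_def)
  show "(matB :: 'a^4^4) $ i $ j = (\<Sum>k\<in>UNIV. of_real (dB$k) * of_real (LB$i$k) * of_real (VB$j$k))"
    for i j
    by (subst matB_eq_of_real_mat) (simp add: matB_factorization)
qed

definition RA :: "real^4^4" where
  "RA = vector [vector [10/21, 17/21, -4/21, -6/21], vector [10/21, -4/21, 17/21, -6/21],
                vector [15/21, -6/21, -6/21, 12/21], vector [-4/21, 10/21, 10/21, 15/21]]"

definition yA :: "real^4" where
  "yA = vector [2, 1, 1, 1]"

lemma orthogonal_matrix_RA: "orthogonal_matrix RA"
  by (simp add: orthogonal_matrix vec_eq_iff forall_4 sum_4 matrix_matrix_mult_def
      transpose_def mat_def RA_def)

lemma norm_schur_prod_matA_RA_yA: "norm (schur_prod matA RA *v yA) / norm yA = sqrt (4727/3087)"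
proof -
  have "schur_prod matA RA *v yA = vector [37/21, 37/21, 2, 5/7]"
    by (simp add: vec_eq_iff forall_4 matrix_vector_mult_def sum_4 schur_prod_def
        matA_def RA_def yA_def)
  then have "norm (schur_prod matA RA *v yA) = sqrt (4727/441)"
    by (simp add: norm_vec_def L2_set_def sum_4 power2_eq_square)
  moreover have "norm yA = sqrt 7"
    by (simp add: yA_def norm_vec_def L2_set_def sum_4)
  ultimately show ?thesis
    by (simp flip: real_sqrt_divide)
qed

lemma schur_norm_matA_ge:
  "sqrt (4727/3087) \<le> schur_norm (matA :: 'a::{real_normed_field,euclidean_space}^4^4)"
proof -
  let ?R = "of_real_mat RA :: 'a^4^4"
  have "sqrt (4727/3087) = norm (schur_prod matA ?R *v of_real_vec yA) / norm (of_real_vec yA :: 'a^4)"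
    by (subst matA_eq_of_real_mat)
      (simp add: schur_prod_of_real_mat_mult_vec norm_schur_prod_matA_RA_yA)
  also have "\<dots> \<le> mat_opnorm (schur_prod matA ?R)"
    by (rule norm_matrix_vector_mult_div_le_mat_opnorm)
  also have "\<dots> \<le> schur_norm (matA :: 'a^4^4)"
    by (intro mat_opnorm_schur_prod_le_schur_norm mat_opnorm_of_real_mat_orthogonal_le
        orthogonal_matrix_RA)
  finally show ?thesis .
qed

lemma schur_norm_matB_less_matA:
  "schur_norm (matB :: 'a::{real_normed_field,euclidean_space}^4^4) < schur_norm (matA :: 'a^4^4)"
proof -
  have "schur_norm (matB :: 'a^4^4) \<le> sqrt (8 * (18/95))"
    by (rule schur_norm_matB_le)
  also have "\<dots> < sqrt (4727/3087)"
    by simp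
  also have "\<dots> \<le> schur_norm (matA :: 'a^4^4)"
    by (rule schur_norm_matA_ge)
  finally show ?thesis .
qed

theorem proposition5p6:
  shows "schur_norm (matA :: real^4^4) > schur_norm (matB :: real^4^4)
       \<and> schur_norm (matA :: complex^4^4) > schur_norm (matB :: complex^4^4)"
  by (intro conjI schur_norm_matB_less_matA)

end
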